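(* Let $S$ be a word with $k=|\mathrm{Alph}(S)|\ge 4$. If $\Psi(S)$ holds and $S$ is s-primitive, then $|S|\le (2k-2)\,\gamma(k-1)$.
   Context: $\mathrm{Alph}(S)$ is the set of letters of $S$. For $S=a_1\cdots a_n$ with $n\ge 4$, $\Psi(S)$ holds iff $a_1\notin\{a_{n-1},a_n\}$ and $a_n\notin\{a_1,a_2\}$; for $n\le 3$, $\Psi(S)$ holds by convention. For words $C,S$, $C$ is an \emph{s-cover} of $S$ if for every position $i$ of $S$ there exist indices $j_0<\dots<j_{|C|-1}$ with $S[j_t]=C[t]$ for all $t$ and $i\in\{j_0,\dots,j_{|C|-1}\}$. An s-cover is \emph{non-trivial} if $|C|<|S|$; $S$ is \emph{s-primitive} if it has no non-trivial s-cover. $\gamma(k)$ is the maximum length of an s-primitive word over an alphabet of size $k$. *)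

theory Defs
  imports Main "HOL-Library.Extended_Nat"
begin

text \<open>Words are lists; positions are 0-based.\<close>

definition Alph :: "'a list \<Rightarrow> 'a set" where
  "Alph S = set S"

definition Psi :: "'a list \<Rightarrow> bool" where
  "Psi S = (let n = length S in
     n \<ge> 4 \<longrightarrow>
       (S ! 0 \<notin> {S ! (n - 2), S ! (n - 1)} \<and> S ! (n - 1) \<notin> {S ! 0, S ! 1}))"

definition s_cover :: "'a list \<Rightarrow> 'a list \<Rightarrow> bool" where
  "s_cover C S = (\<forall>i < length S. \<exists>js. length js = length C \<and> sorted_wrt (<) js \<and>
      (\<forall>j \<in> set js. j < length S) \<and>
      (\<forall>t < length C. S ! (js ! t) = C ! t) \<and> i \<in> set js)"

definition s_primitive :: "'a list \<Rightarrow> bool" where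
  "s_primitive S = (\<not> (\<exists>C. s_cover C S \<and> length C < length S))"

text \<open>gamma k: maximum length of an s-primitive word over a k-letter alphabet
  (taken as {0..<k}); as a supremum in enat (infinity if unbounded).\<close>
definition gamma :: "nat \<Rightarrow> enat" where
  "gamma k = (SUP w \<in> {w :: nat list. set w \<subseteq> {..<k} \<and> s_primitive w}. enat (length w))"

end

theory Submission
  imports Defs "HOL-Library.Sublist"
begin

text \<open>Let X list the k letters of S in order of first occurrence and Y in order of last
  occurrence. If |S| > 2k, the word X Y (with the first letter of Y dropped if it repeats the last
  letter of X) is too short to s-cover S, so some position p, carrying a letter z with
  X = X1 z X2 and Y = Y1 z Y2, lies in no occurrence of it. Every letter of X1 first occurs before p
  and every letter of Y2 last occurs after p; hence the prefix S[0..p] avoids (last X) Y1 and the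
  suffix after p avoids X2 (hd Y) as subsequences. A factor of S missing some letter is s-primitive
  over k - 1 letters, so its length is at most \<gamma>(k - 1); by greedy matching, a factor avoiding
  a word without adjacent repetitions is at most \<gamma>(k - 1) times as long as that word. Hence
  |S| \<le> (|Y1| + |X2| + 2) \<gamma>(k - 1), and \<Psi>(S) rules out |X1| + |Y2| \<le> 1, which gives
  |Y1| + |X2| + 2 \<le> 2k - 2.\<close>

section \<open>Lists and subsequences\<close>

lemma subseq_iff_indices:
  "subseq C S \<longleftrightarrow> (\<exists>js. sorted_wrt (<) js \<and> set js \<subseteq> {..<length S} \<and> C = map ((!) S) js)"
proof
  show "subseq C S \<Longrightarrow> \<exists>js. sorted_wrt (<) js \<and> set js \<subseteq> {..<length S} \<and> C = map ((!) S) js"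
  proof (induction rule: list_emb.induct)
    case (list_emb_Cons C S a)
    then obtain js where "sorted_wrt (<) js" "set js \<subseteq> {..<length S}" "C = map ((!) S) js"
      by blast
    then show ?case
      by (intro exI[of _ "map Suc js"]) (auto simp: sorted_wrt_map)
  next
    case (list_emb_Cons2 a b C S)
    then obtain js where "sorted_wrt (<) js" "set js \<subseteq> {..<length S}" "C = map ((!) S) js"
      by blast
    then show ?case
      using list_emb_Cons2.hyps by (intro exI[of _ "0 # map Suc js"]) (auto simp: sorted_wrt_map)
  qed auto
next
  show "\<exists>js. sorted_wrt (<) js \<and> set js \<subseteq> {..<length S} \<and> C = map ((!) S) js \<Longrightarrow> subseq C S"
  proof (induction S arbitrary: C)
    case Nil
    then show ?case by auto
  next
    case (Cons a S)
    then obtain js where js: "sorted_wrt (<) js" "set js \<subseteq> {..<Suc (length S)}"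
      and C: "C = map ((!) (a # S)) js" by auto
    have tail: "subseq (map ((!) (a # S)) L) S"
      if "sorted_wrt (<) L" "set L \<subseteq> {1..<Suc (length S)}" for L
    proof -
      have "sorted_wrt (<) (map (\<lambda>i. i - 1) L)"
        using that by (auto simp: sorted_wrt_map subset_eq elim!: sorted_wrt_mono_rel[rotated])
      moreover have "set (map (\<lambda>i. i - 1) L) \<subseteq> {..<length S}"
        using that by (force simp: subset_eq)
      moreover have "map ((!) (a # S)) L = map ((!) S) (map (\<lambda>i. i - 1) L)"
        using that by (auto simp: nth_Cons' subset_eq)
      ultimately show ?thesis
        using Cons.IH by blast
    qed
    show ?case
    proof (cases js)
      case (Cons j js')
      then have "set js' \<subseteq> {1..<Suc (length S)}"
        using js by (fastforce simp: subset_eq)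
      then show ?thesis
        using js C Cons tail[of js] tail[of js'] by (cases j) auto
    qed (use C in simp)
  qed
qed

lemma subseq_rev_iff: "subseq (rev xs) (rev ys) \<longleftrightarrow> subseq xs ys"
proof -
  have "subseq (rev xs) (rev ys)" if "subseq xs ys" for xs ys :: "'b list"
    using that by induction (auto intro: subseq_rev_drop_many list_emb_append_mono)
  then show ?thesis
    by (metis rev_rev_ident)
qed

lemma subseq_remdups: "subseq (remdups xs) xs"
  by (induction xs) auto

lemma subseq_snoc_neq:
  assumes "subseq w (T @ [c])" and "last w \<noteq> c"
  shows "subseq w T"
proof -
  obtain w1 w2 where "w = w1 @ w2" "subseq w1 T" "subseq w2 [c]"
    using assms(1) by (auto simp: subseq_append_iff)
  moreover have "w2 = [] \<or> w2 = [c]"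
    using \<open>subseq w2 [c]\<close> by (cases w2) (auto split: if_splits dest: list_emb_Nil2)
  ultimately show ?thesis
    using assms(2) by auto
qed

lemma distinct_imp_distinct_adj: "distinct xs \<Longrightarrow> distinct_adj xs"
  by (induction xs) (auto simp: distinct_adj_Cons)

lemma distinct_split_hd_neq:
  assumes "distinct Y" and "2 \<le> length Y"
  obtains Y0 Ys where "Y = Y0 @ Ys" "set Y0 \<subseteq> {x}" "Ys \<noteq> []" "hd Ys \<noteq> x"
proof (cases "hd Y = x")
  case True
  then show ?thesis
    using that[of "[hd Y]" "tl Y"] assms by (cases Y; cases "tl Y") auto
next
  case False
  then show ?thesis
    using that[of "[]" Y] assms by (cases Y) auto
qed

section \<open>Covers and s-primitive words\<close>

definition covers_position :: "'a list \<Rightarrow> 'a list \<Rightarrow> nat \<Rightarrow> bool" where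
  "covers_position C S p \<longleftrightarrow>
    (\<exists>u v. C = u @ S ! p # v \<and> subseq u (take p S) \<and> subseq v (drop (Suc p) S))"

lemma covers_position_iff_indices:
  assumes p: "p < length S"
  shows "covers_position C S p \<longleftrightarrow>
    (\<exists>js. sorted_wrt (<) js \<and> set js \<subseteq> {..<length S} \<and> C = map ((!) S) js \<and> p \<in> set js)"
proof
  assume "covers_position C S p"
  then obtain u v where C: "C = u @ S ! p # v" and "subseq u (take p S)" "subseq v (drop (Suc p) S)"
    unfolding covers_position_def by blast
  then obtain ju jv where ju: "sorted_wrt (<) ju" "set ju \<subseteq> {..<p}" "u = map ((!) (take p S)) ju"
    and jv: "sorted_wrt (<) jv" "set jv \<subseteq> {..<length S - Suc p}" "v = map ((!) (drop (Suc p) S)) jv"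
    using p unfolding subseq_iff_indices by (auto simp: min_absorb1)
  define js where "js = ju @ p # map ((+) (Suc p)) jv"
  have "sorted_wrt (<) js"
    using ju jv by (auto simp: js_def sorted_wrt_append sorted_wrt_map subset_eq)
  moreover have "set js \<subseteq> {..<length S}"
    using ju jv p by (auto simp: js_def subset_eq)
  moreover have "C = map ((!) S) js"
    using ju jv p by (auto simp: C js_def subset_eq)
  moreover have "p \<in> set js"
    by (simp add: js_def)
  ultimately show "\<exists>js. sorted_wrt (<) js \<and> set js \<subseteq> {..<length S} \<and> C = map ((!) S) js \<and> p \<in> set js"
    by blast
next
  assume "\<exists>js. sorted_wrt (<) js \<and> set js \<subseteq> {..<length S} \<and> C = map ((!) S) js \<and> p \<in> set js"
  then obtain js where js: "sorted_wrt (<) js" "set js \<subseteq> {..<length S}" "C = map ((!) S) js" "p \<in> set js"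
    by blast
  then obtain ju jv where "js = ju @ p # jv"
    by (meson split_list)
  then have sorted: "sorted_wrt (<) (ju @ p # jv)" and bound: "set jv \<subseteq> {..<length S}"
    and C: "C = map ((!) S) (ju @ p # jv)"
    using js by auto
  have ju: "sorted_wrt (<) ju" "\<forall>j\<in>set ju. j < p" and jv: "sorted_wrt (<) jv" "\<forall>j\<in>set jv. p < j"
    using sorted by (auto simp: sorted_wrt_append)
  define jv' where "jv' = map (\<lambda>j. j - Suc p) jv"
  have "sorted_wrt (<) jv'"
    using jv by (auto simp: jv'_def sorted_wrt_map elim!: sorted_wrt_mono_rel[rotated])
  moreover have "set jv' \<subseteq> {..<length (drop (Suc p) S)}"
    using jv(2) bound by (force simp: jv'_def subset_eq)
  moreover have "map ((!) S) jv = map ((!) (drop (Suc p) S)) jv'"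
    using jv(2) bound by (force simp: jv'_def subset_eq)
  ultimately have "subseq (map ((!) S) jv) (drop (Suc p) S)"
    unfolding subseq_iff_indices by blast
  moreover have "subseq (map ((!) S) ju) (take p S)"
    unfolding subseq_iff_indices using ju p by (intro exI[of _ ju]) auto
  ultimately show "covers_position C S p"
    unfolding covers_position_def using C by auto
qed

lemma s_cover_iff: "s_cover C S \<longleftrightarrow> (\<forall>p < length S. covers_position C S p)"
proof -
  have "(length js = length C \<and> sorted_wrt (<) js \<and> (\<forall>j\<in>set js. j < length S) \<and>
      (\<forall>t < length C. S ! (js ! t) = C ! t) \<and> p \<in> set js) \<longleftrightarrow>
    (sorted_wrt (<) js \<and> set js \<subseteq> {..<length S} \<and> C = map ((!) S) js \<and> p \<in> set js)" for js p
    by (auto simp: list_eq_iff_nth_eq)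
  then have "(\<exists>js. length js = length C \<and> sorted_wrt (<) js \<and> (\<forall>j\<in>set js. j < length S) \<and>
      (\<forall>t < length C. S ! (js ! t) = C ! t) \<and> p \<in> set js) \<longleftrightarrow> covers_position C S p"
    if "p < length S" for p
    by (simp only: covers_position_iff_indices[OF that])
  then show ?thesis
    unfolding s_cover_def by blast
qed

lemma s_cover_imp_subseq:
  assumes "s_cover C S" and "S \<noteq> []"
  shows "subseq C S"
proof -
  obtain v where "C = S ! 0 # v" "subseq v (drop 1 S)"
    using assms unfolding s_cover_iff covers_position_def by fastforce
  then show ?thesis
    using \<open>S \<noteq> []\<close> by (cases S) auto
qed

lemma s_cover_imp_set_subset:
  assumes "s_cover C S"
  shows "set S \<subseteq> set C"
proof
  fix x assume "x \<in> set S"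
  then obtain p where "p < length S" "x = S ! p"
    by (auto simp: in_set_conv_nth)
  then show "x \<in> set C"
    using assms unfolding s_cover_iff covers_position_def by fastforce
qed

lemma s_cover_Cons:
  assumes cover: "s_cover C T" and "T \<noteq> []"
  shows "s_cover (a # C) (a # T)"
  unfolding s_cover_iff
proof (intro allI impI)
  fix p assume p: "p < length (a # T)"
  show "covers_position (a # C) (a # T) p"
  proof (cases p)
    case 0
    then show ?thesis
      unfolding covers_position_def using s_cover_imp_subseq[OF assms] by auto
  next
    case (Suc q)
    then obtain u v where "C = u @ T ! q # v" "subseq u (take q T)" "subseq v (drop (Suc q) T)"
      using cover p unfolding s_cover_iff covers_position_def by auto
    then show ?thesis
      unfolding covers_position_def using Suc by (intro exI[of _ "a # u"] exI[of _ v]) auto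
  qed
qed

lemma s_cover_snoc:
  assumes cover: "s_cover C T" and "T \<noteq> []"
  shows "s_cover (C @ [a]) (T @ [a])"
  unfolding s_cover_iff
proof (intro allI impI)
  fix p assume p: "p < length (T @ [a])"
  show "covers_position (C @ [a]) (T @ [a]) p"
  proof (cases "p < length T")
    case True
    then obtain u v where "C = u @ T ! p # v" "subseq u (take p T)" "subseq v (drop (Suc p) T)"
      using cover unfolding s_cover_iff covers_position_def by auto
    then show ?thesis
      unfolding covers_position_def using True by (intro exI[of _ u] exI[of _ "v @ [a]"]) (auto simp: nth_append)
  next
    case False
    then have "p = length T"
      using p by simp
    then show ?thesis
      unfolding covers_position_def using s_cover_imp_subseq[OF assms] by auto
  qed
qed

lemma s_cover_append:
  assumes "s_cover C T" and "T \<noteq> []"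
  shows "s_cover (P @ C @ Q) (P @ T @ Q)"
proof -
  have "s_cover (C @ Q) (T @ Q)"
  proof (induction Q rule: rev_induct)
    case (snoc a Q)
    then show ?case
      using s_cover_snoc[of "C @ Q" "T @ Q" a] \<open>T \<noteq> []\<close> by simp
  qed (use assms in simp)
  then show ?thesis
  proof (induction P)
    case (Cons a P)
    then show ?case
      using s_cover_Cons[of "P @ C @ Q" "P @ T @ Q" a] \<open>T \<noteq> []\<close> by simp
  qed simp
qed

lemma s_cover_map: "s_cover C S \<Longrightarrow> s_cover (map f C) (map f S)"
  unfolding s_cover_iff covers_position_def by (fastforce simp: take_map drop_map intro: subseq_map)

lemma s_primitive_sublist:
  assumes "s_primitive S" and "sublist T S"
  shows "s_primitive T"
proof (rule ccontr)
  assume "\<not> s_primitive T"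
  then obtain C where "s_cover C T" "length C < length T"
    unfolding s_primitive_def by blast
  moreover obtain P Q where "S = P @ T @ Q"
    using \<open>sublist T S\<close> by (auto simp: sublist_def)
  moreover have "T \<noteq> []"
    using \<open>length C < length T\<close> by auto
  ultimately have "s_cover (P @ C @ Q) S" "length (P @ C @ Q) < length S"
    using s_cover_append by auto
  then show False
    using \<open>s_primitive S\<close> unfolding s_primitive_def by blast
qed

lemma s_primitive_imp_distinct_adj:
  assumes "s_primitive S"
  shows "distinct_adj S"
  using assms
proof (induction S)
  case (Cons x S)
  have "s_primitive S"
    using Cons.prems by (rule s_primitive_sublist) (auto simp: sublist_def intro: exI[of _ "[x]"])
  moreover have "x \<noteq> hd S" if "S \<noteq> []"
  proof
    assume "x = hd S"
    then have "sublist [x, x] (x # S)"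
      using that by (cases S) (auto simp: sublist_def)
    then have "s_primitive [x, x]"
      by (rule s_primitive_sublist[OF Cons.prems])
    moreover have "s_cover [x] [x, x]"
      unfolding s_cover_iff covers_position_def by (auto simp: less_Suc_eq intro!: exI[of _ "[]"])
    ultimately show False
      unfolding s_primitive_def by fastforce
  qed
  ultimately show ?case
    using Cons.IH by (auto simp: distinct_adj_Cons)
qed simp

lemma s_primitive_map:
  assumes "s_primitive S" and "inj_on f (set S)"
  shows "s_primitive (map f S)"
proof (rule ccontr)
  assume "\<not> s_primitive (map f S)"
  then obtain C where "s_cover C (map f S)" "length C < length S"
    unfolding s_primitive_def by auto
  moreover have "map (inv_into (set S) f) (map f S) = S"
    using assms(2) by (simp add: map_idI)
  ultimately have "s_cover (map (inv_into (set S) f) C) S" "length (map (inv_into (set S) f) C) < length S"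
    using s_cover_map by (metis, simp)
  then show False
    using assms(1) unfolding s_primitive_def by blast
qed

lemma distinct_imp_s_primitive:
  assumes "distinct S"
  shows "s_primitive S"
  unfolding s_primitive_def
proof
  assume "\<exists>C. s_cover C S \<and> length C < length S"
  then obtain C where "set S \<subseteq> set C" "length C < length S"
    using s_cover_imp_set_subset by blast
  moreover have "length S \<le> length C"
    using card_mono[OF _ \<open>set S \<subseteq> set C\<close>] card_length[of C] distinct_card[OF assms] by simp
  ultimately show False
    by simp
qed

lemma length_le_gamma:
  assumes "s_primitive S" and "card (set S) \<le> m"
  shows "enat (length S) \<le> gamma m"
proof -
  obtain f where f: "bij_betw f (set S) {..<card (set S)}"
    by (metis ex_bij_betw_finite_nat finite_set lessThan_atLeast0)
  then have "s_primitive (map f S)"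
    using assms(1) bij_betw_imp_inj_on s_primitive_map by blast
  moreover have "set (map f S) \<subseteq> {..<m}"
    using f assms(2) by (auto simp: bij_betw_def)
  ultimately have "enat (length (map f S)) \<le> gamma m"
    unfolding gamma_def by (intro SUP_upper) simp
  then show ?thesis
    by simp
qed

lemma le_gamma: "enat m \<le> gamma m"
  using length_le_gamma[OF distinct_imp_s_primitive[of "[0..<m]"]] by simp

lemma sublist_length_le_gamma:
  assumes "s_primitive S" and "sublist U S" and "\<not> set S \<subseteq> set U"
  shows "enat (length U) \<le> gamma (card (set S) - 1)"
proof -
  have "set U \<subset> set S"
    using assms(2,3) by (auto simp: sublist_def)
  then have "card (set U) \<le> card (set S) - 1"
    using psubset_card_mono[of "set S" "set U"] by simp
  then show ?thesis
    using length_le_gamma s_primitive_sublist assms(1,2) by blast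
qed

section \<open>Orders of first and last occurrences\<close>

lemma remdups_split_subseq: "remdups (L @ z # R) = Y1 @ z # Y2 \<Longrightarrow> subseq Y2 R"
proof (induction L arbitrary: Y1)
  case Nil
  show ?case
  proof (cases "z \<in> set R")
    case True
    then have "subseq (Y1 @ z # Y2) R"
      using Nil subseq_remdups[of R] by simp
    then show ?thesis
      by (metis list_emb_appendD subseq_Cons' subseq_drop_many)
  next
    case False
    then have "z # remdups R = Y1 @ z # Y2"
      using Nil by simp
    moreover have "z \<notin> set (remdups R)"
      using False by simp
    ultimately have "Y2 = remdups R"
      by (cases Y1) auto
    then show ?thesis
      by (simp add: subseq_remdups)
  qed
next
  case (Cons x L)
  show ?case
  proof (cases "x \<in> set (L @ z # R)")
    case True
    then show ?thesis
      using Cons by simp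
  next
    case False
    then show ?thesis
      using Cons by (cases Y1) auto
  qed
qed

lemma remdups_suffix_subseq:
  assumes "p < length S" and "remdups S = Y1 @ S ! p # Y2"
  shows "subseq Y2 (drop (Suc p) S)"
  using assms by (intro remdups_split_subseq[of "take p S" "S ! p" _ Y1]) (simp add: id_take_nth_drop[symmetric])

(* remdups keeps the last occurrence of each letter: remdups S lists the letters of S by last
   occurrence, first_occurrences S by first occurrence. *)
definition first_occurrences :: "'a list \<Rightarrow> 'a list" where
  "first_occurrences S = rev (remdups (rev S))"

lemma distinct_first_occurrences: "distinct (first_occurrences S)"
  by (simp add: first_occurrences_def)

lemma set_first_occurrences: "set (first_occurrences S) = set S"
  by (simp add: first_occurrences_def)

lemma first_occurrences_prefix_subseq:
  assumes "p < length S" and "first_occurrences S = X1 @ S ! p # X2"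
  shows "subseq X1 (take p S)"
proof -
  have "rev S = rev (drop (Suc p) S) @ S ! p # rev (take p S)"
    using arg_cong[OF id_take_nth_drop[OF assms(1)], of rev] by simp
  moreover have "remdups (rev S) = rev X2 @ S ! p # rev X1"
    using arg_cong[OF assms(2), of rev] by (simp add: first_occurrences_def)
  ultimately have "subseq (rev X1) (rev (take p S))"
    by (metis remdups_split_subseq)
  then show ?thesis
    by (simp add: subseq_rev_iff)
qed

lemma first_occurrences_subseq_extend:
  assumes X: "first_occurrences S = X @ x # X'" and sub: "subseq (x # W) (take p S)"
  shows "subseq (X @ x # W) (take p S)"
proof -
  obtain us vs where take: "take p S = us @ x # vs" and "subseq W vs"
    using sub by (auto dest: list_emb_ConsD)
  define q where "q = length us"
  have "q < p" "q < length S"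
    using arg_cong[OF take, of length] by (auto simp: q_def)
  moreover have "take q S = us" "S ! q = x"
    using arg_cong[OF take, of "take q"] arg_cong[OF take, of "\<lambda>xs. xs ! q"] \<open>q < p\<close>
    by (simp_all add: q_def min_absorb1)
  ultimately have "subseq X us"
    using first_occurrences_prefix_subseq[of q S X X'] X by simp
  then show ?thesis
    using take \<open>subseq W vs\<close> by (simp add: list_emb_append_mono)
qed

lemma remdups_subseq_extend:
  assumes Y: "remdups S = Y @ y # Y'" and sub: "subseq (W @ [y]) (drop p S)"
  shows "subseq (W @ y # Y') (drop p S)"
proof -
  obtain us vs where "drop p S = us @ vs" "subseq W us" "y \<in> set vs"
    using sub by (auto simp: subseq_singleton_left dest!: list_emb_appendD)
  then obtain as bs where drop: "drop p S = us @ as @ y # bs" and "subseq W us"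
    by (auto dest: split_list)
  define q where "q = p + length (us @ as)"
  have "q < length S"
    using arg_cong[OF drop, of length] by (auto simp: q_def)
  moreover have "S ! q = y" "drop (Suc q) S = bs"
    using arg_cong[OF drop, of "\<lambda>xs. xs ! length (us @ as)"] arg_cong[OF drop, of "drop (Suc (length (us @ as)))"]
      \<open>q < length S\<close> by (simp_all add: q_def nth_append add.commute)
  ultimately have "subseq Y' bs"
    using remdups_suffix_subseq[of q S Y Y'] Y by simp
  then show ?thesis
    using drop \<open>subseq W us\<close> by (simp add: list_emb_append_mono subseq_drop_many)
qed

lemma remdups_append_two:
  assumes "c \<noteq> d"
  obtains Y where "remdups (R @ [c, d]) = Y @ [c, d]"
proof (induction R arbitrary: thesis)
  case Nil
  then show ?case
    using assms Nil[of "[]"] by simp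
next
  case (Cons x R)
  then obtain Y where "remdups (R @ [c, d]) = Y @ [c, d]"
    by blast
  then show ?case
    using Cons.prems by (cases "x \<in> set (R @ [c, d])") (auto intro: exI[of _ "x # Y"])
qed

lemma first_occurrences_Cons_Cons:
  assumes "a \<noteq> b"
  obtains X where "first_occurrences (a # b # R) = a # b # X"
proof -
  obtain Y where "remdups (rev R @ [b, a]) = Y @ [b, a]"
    using remdups_append_two assms by metis
  then show ?thesis
    using that[of "rev Y"] by (simp add: first_occurrences_def)
qed

lemma Psi_first_last_offsets:
  assumes "Psi S" and "distinct_adj S" and "4 \<le> length S"
    and X: "first_occurrences S = X1 @ z # X2" and Y: "remdups S = Y1 @ z # Y2"
  shows "2 \<le> length X1 + length Y2"
proof -
  obtain a b R where S: "S = a # b # R"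
    using assms(3) by (metis Suc_le_length_iff numeral_eq_Suc pred_numeral_simps)
  obtain R'' d where "S = R'' @ [d]"
    using assms(3) by (cases S rule: rev_exhaust) auto
  moreover obtain R' c where "R'' = R' @ [c]"
    using assms(3) calculation by (cases R'' rule: rev_exhaust) auto
  ultimately have S': "S = R' @ [c, d]"
    by simp
  have "a \<noteq> b"
    using assms(2) unfolding S by simp
  moreover have "c \<noteq> d"
    using assms(2) unfolding S' by (simp add: distinct_adj_append_iff)
  ultimately obtain X' Y' where X': "first_occurrences S = a # b # X'" and Y': "remdups S = Y' @ [c, d]"
    using S S' first_occurrences_Cons_Cons remdups_append_two by metis
  have "S ! (length S - 2) = c" "S ! (length S - 1) = d"
    unfolding S' by (simp_all add: nth_append)
  then have psi: "a \<noteq> c" "a \<noteq> d" "b \<noteq> d"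
    using \<open>Psi S\<close> assms(3) unfolding Psi_def Let_def S by auto
  have "rev Y2 @ z # rev Y1 = d # c # rev Y'"
    using arg_cong[OF Y'[unfolded Y], of rev] by simp
  then have Y2: "length Y2 = 0 \<Longrightarrow> z = d" "length Y2 = 1 \<Longrightarrow> z = c"
    by (auto simp: length_Suc_conv)
  have "X1 @ z # X2 = a # b # X'"
    using X X' by simp
  then have X1: "length X1 = 0 \<Longrightarrow> z = a" "length X1 = 1 \<Longrightarrow> z = b"
    by (auto simp: length_Suc_conv)
  show ?thesis
  proof (rule ccontr)
    assume "\<not> ?thesis"
    then consider "length X1 = 0" "length Y2 \<le> 1" | "length X1 = 1" "length Y2 = 0"
      by linarith
    then show False
      using X1 Y2 psi by cases (auto simp: le_Suc_eq)
  qed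
qed

section \<open>The length bound\<close>

(* Greedy matching: T = T0 x T' with x missing from T0. As the next letter of w differs from x,
   the rest of w still avoids x T', so x is charged to the next block instead of costing one extra. *)
lemma length_le_if_not_subseq:
  assumes short: "\<And>U. sublist U S \<Longrightarrow> \<not> set S \<subseteq> set U \<Longrightarrow> length U \<le> g"
  shows "sublist T S \<Longrightarrow> distinct_adj w \<Longrightarrow> set w \<subseteq> set S \<Longrightarrow> \<not> subseq w T \<Longrightarrow>
    length T \<le> length w * g"
proof (induction w arbitrary: T)
  case (Cons x w)
  show ?case
  proof (cases "x \<in> set T")
    case False
    then have "length T \<le> g"
      using Cons.prems short[of T] by auto
    then show ?thesis
      by simp
  next
    case True
    then obtain T0 T' where T: "T = T0 @ x # T'" and "x \<notin> set T0"
      by (meson split_list_first)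
    then have "length T0 \<le> g"
      using Cons.prems short[of T0] by (auto intro: sublist_order.order_trans)
    have "\<not> subseq w T'"
      using Cons.prems(4) T by (auto intro: list_emb_append2)
    then obtain y w' where "w = y # w'" and "y \<noteq> x"
      using Cons.prems(2) by (cases w) auto
    then have "\<not> subseq w (x # T')"
      using \<open>\<not> subseq w T'\<close> by (metis subseq_Cons2_neq)
    moreover have "sublist (x # T') S"
      using Cons.prems(1) T by (auto intro: sublist_order.order_trans)
    moreover have "distinct_adj w" "set w \<subseteq> set S"
      using Cons.prems(2,3) by (auto simp: distinct_adj_Cons)
    ultimately have "length (x # T') \<le> length w * g"
      using Cons.IH by blast
    then show ?thesis
      using \<open>length T0 \<le> g\<close> T by simp
  qed
qed simp

lemma prefix_length_le:
  assumes short: "\<And>U. sublist U S \<Longrightarrow> \<not> set S \<subseteq> set U \<Longrightarrow> length U \<le> g"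
    and p: "p < length S" and X: "first_occurrences S = X @ [x]"
    and not_sub: "\<not> subseq (X @ x # W) (take p S)"
    and succ: "distinct_adj (x # W)" and W: "set W \<subseteq> set S"
    and last: "last (x # W) \<noteq> S ! p"
  shows "Suc p \<le> Suc (length W) * g"
proof -
  have "\<not> subseq (x # W) (take p S)"
    using first_occurrences_subseq_extend[of S X x "[]"] X not_sub by auto
  moreover have "take (Suc p) S = take p S @ [S ! p]"
    using p by (simp add: take_Suc_conv_app_nth)
  ultimately have "\<not> subseq (x # W) (take (Suc p) S)"
    using subseq_snoc_neq[of "x # W" "take p S" "S ! p"] last by auto
  moreover have "set (x # W) \<subseteq> set S"
    using W set_first_occurrences[of S] unfolding X by auto
  ultimately have "length (take (Suc p) S) \<le> length (x # W) * g"
    using length_le_if_not_subseq[of S g "take (Suc p) S" "x # W", OF short sublist_take succ] by blast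
  then show ?thesis
    using p by simp
qed

lemma suffix_length_le:
  assumes short: "\<And>U. sublist U S \<Longrightarrow> \<not> set S \<subseteq> set U \<Longrightarrow> length U \<le> g"
    and Y: "remdups S = Y @ y # Y'" and not_sub: "\<not> subseq (W @ y # Y') (drop p S)"
    and succ: "distinct_adj (W @ [y])" and W: "set W \<subseteq> set S"
  shows "length S - p \<le> Suc (length W) * g"
proof -
  have "\<not> subseq (W @ [y]) (drop p S)"
    using remdups_subseq_extend[OF Y] not_sub by blast
  moreover have "set (W @ [y]) \<subseteq> set S"
    using W arg_cong[OF Y, of set] by auto
  ultimately have "length (drop p S) \<le> length (W @ [y]) * g"
    using length_le_if_not_subseq[of S g "drop p S" "W @ [y]", OF short sublist_drop succ] by blast
  then show ?thesis
    by simp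
qed

lemma uncovered_position_split:
  assumes p: "p < length S"
    and uncovered: "\<not> covers_position (X @ Ys) S p"
    and X: "first_occurrences S = X" and Y: "remdups S = Y0 @ Ys" and Y0: "set Y0 \<subseteq> {last X}"
  obtains X1 X2 Y1 Y2 where "X = X1 @ S ! p # X2" "Ys = Y1 @ S ! p # Y2"
    "\<not> subseq (X @ Y1) (take p S)" "\<not> subseq (X2 @ Ys) (drop (Suc p) S)"
proof -
  define z where "z = S ! p"
  have "z \<in> set X"
    using p unfolding z_def X[symmetric] set_first_occurrences by simp
  then obtain X1 X2 where X12: "X = X1 @ z # X2"
    by (meson split_list)
  then have "subseq X1 (take p S)"
    using first_occurrences_prefix_subseq[of p S X1 X2] p X unfolding z_def by simp
  moreover have "X @ Ys = X1 @ S ! p # (X2 @ Ys)"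
    using X12 z_def by simp
  ultimately have not_X2: "\<not> subseq (X2 @ Ys) (drop (Suc p) S)"
    using uncovered unfolding covers_position_def by blast
  have "z \<in> set Ys"
  proof (rule ccontr)
    assume "z \<notin> set Ys"
    moreover have "z \<in> set (Y0 @ Ys)"
      using p unfolding z_def Y[symmetric] by simp
    ultimately have "z \<in> set Y0"
      by simp
    then obtain Y0' Y0'' where "Y0 = Y0' @ z # Y0''"
      by (meson split_list)
    then have "subseq (Y0'' @ Ys) (drop (Suc p) S)"
      using remdups_suffix_subseq[of p S Y0' "Y0'' @ Ys"] p Y z_def by simp
    then have "subseq Ys (drop (Suc p) S)"
      by (rule subseq_order.order_trans[OF subseq_drop_many[OF subseq_order.order_refl]])
    moreover have "X2 = []"
    proof (rule ccontr)
      assume "X2 \<noteq> []"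
      then have "last X \<in> set X2"
        using X12 by simp
      moreover have "last X = z"
        using Y0 \<open>z \<in> set Y0\<close> by auto
      ultimately show False
        using distinct_first_occurrences[of S] X X12 by simp
    qed
    ultimately show False
      using not_X2 by simp
  qed
  then obtain Y1 Y2 where Y12: "Ys = Y1 @ z # Y2"
    by (meson split_list)
  then have "subseq Y2 (drop (Suc p) S)"
    using remdups_suffix_subseq[of p S "Y0 @ Y1" Y2] p Y z_def by simp
  moreover have "X @ Ys = (X @ Y1) @ S ! p # Y2"
    using Y12 z_def by simp
  ultimately have "\<not> subseq (X @ Y1) (take p S)"
    using uncovered unfolding covers_position_def by blast
  then show ?thesis
    using that X12 Y12 not_X2 z_def by blast
qed

lemma uncovered_position_length_le:
  assumes short: "\<And>U. sublist U S \<Longrightarrow> \<not> set S \<subseteq> set U \<Longrightarrow> length U \<le> g"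
    and p: "p < length S"
    and uncovered: "\<not> covers_position (X' @ x # Ys) S p"
    and X: "first_occurrences S = X' @ [x]"
    and Y: "remdups S = Y0 @ Ys" and Y0: "set Y0 \<subseteq> {x}" and "Ys \<noteq> []" and hd: "hd Ys \<noteq> x"
  obtains X1 X2 Y1 Y2 where "X' @ [x] = X1 @ S ! p # X2" "Ys = Y1 @ S ! p # Y2"
    "length S \<le> (Suc (length Y1) + Suc (length X2)) * g"
proof -
  have "\<not> covers_position ((X' @ [x]) @ Ys) S p"
    using uncovered by simp
  moreover have "set Y0 \<subseteq> {last (X' @ [x])}"
    using Y0 by simp
  ultimately obtain X1 X2 Y1 Y2 where X12: "X' @ [x] = X1 @ S ! p # X2" and Y12: "Ys = Y1 @ S ! p # Y2"
    and not_Y1: "\<not> subseq ((X' @ [x]) @ Y1) (take p S)" and not_X2: "\<not> subseq (X2 @ Ys) (drop (Suc p) S)"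
    using uncovered_position_split[OF p _ X Y] by blast
  have distinct: "distinct (X' @ [x])" "distinct Ys"
    using distinct_first_occurrences[of S] X distinct_remdups[of S] Y by (auto simp del: distinct_remdups)
  have set: "set (X' @ [x]) = set S" "set Ys \<subseteq> set S"
    using set_first_occurrences[of S] X set_remdups[of S] Y by auto
  have "distinct_adj (x # Y1)"
    using distinct(2) hd Y12 by (cases Y1) (auto simp: distinct_adj_Cons intro: distinct_imp_distinct_adj)
  moreover have "last (x # Y1) \<noteq> S ! p"
    using distinct(2) hd Y12 by (cases Y1 rule: rev_cases) auto
  ultimately have left: "Suc p \<le> Suc (length Y1) * g"
    using prefix_length_le[OF short p X, of Y1] not_Y1 set Y12 by auto
  have "Ys = hd Ys # tl Ys"
    using \<open>Ys \<noteq> []\<close> by simp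
  moreover have "distinct_adj (X2 @ [hd Ys])"
  proof (cases X2 rule: rev_cases)
    case (snoc X2' x')
    then have "x' = x"
      using arg_cong[OF X12, of last] by simp
    then show ?thesis
      using distinct(1) hd X12 snoc by (auto simp: distinct_adj_append_iff intro: distinct_imp_distinct_adj)
  qed simp
  ultimately have right: "length S - Suc p \<le> Suc (length X2) * g"
    using suffix_length_le[OF short, where Y = Y0 and y = "hd Ys" and Y' = "tl Ys" and W = X2 and p = "Suc p"]
      Y not_X2 set X12 by auto
  have "length S = Suc p + (length S - Suc p)"
    using p by simp
  also have "\<dots> \<le> (Suc (length Y1) + Suc (length X2)) * g"
    using left right by (simp add: add_mult_distrib)
  finally show ?thesis
    using that X12 Y12 by blast
qed

lemma length_le_if_Psi:
  assumes pr: "s_primitive S" and "Psi S" and k: "4 \<le> card (set S)"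
    and short: "\<And>U. sublist U S \<Longrightarrow> \<not> set S \<subseteq> set U \<Longrightarrow> length U \<le> g"
    and g: "card (set S) - 1 \<le> g"
  shows "length S \<le> (2 * card (set S) - 2) * g"
proof (cases "length S \<le> 2 * card (set S)")
  case True
  have "2 * card (set S) \<le> (2 * card (set S) - 2) * 3"
    using k by simp
  also have "\<dots> \<le> (2 * card (set S) - 2) * g"
    using k g by (intro mult_le_mono2) simp
  finally show ?thesis
    using True by simp
next
  case False
  obtain X' x where X: "first_occurrences S = X' @ [x]"
    using k by (cases "first_occurrences S" rule: rev_cases) (auto simp: first_occurrences_def)
  have len_X: "length (X' @ [x]) = card (set S)"
    using distinct_card[OF distinct_first_occurrences[of S]] set_first_occurrences[of S] X by simp
  \<comment> \<open>A leading x is dropped from the last-occurrence order, so that no letter repeats at the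
    junction of the candidate cover X' x Ys.\<close>
  obtain Y0 Ys where Y: "remdups S = Y0 @ Ys" "set Y0 \<subseteq> {x}" "Ys \<noteq> []" "hd Ys \<noteq> x"
    using distinct_split_hd_neq[of "remdups S"] k by (auto simp: length_remdups_card_conv)
  have "length (X' @ x # Ys) < length S"
    using False len_X arg_cong[OF Y(1), of length] by (simp add: length_remdups_card_conv)
  then obtain p where p: "p < length S"
    and uncovered: "\<not> covers_position (X' @ x # Ys) S p"
    using pr unfolding s_primitive_def s_cover_iff by blast
  then obtain X1 X2 Y1 Y2 where X12: "X' @ [x] = X1 @ S ! p # X2" and Y12: "Ys = Y1 @ S ! p # Y2"
    and bound: "length S \<le> (Suc (length Y1) + Suc (length X2)) * g"
    using uncovered_position_length_le[OF short p uncovered X Y] by blast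
  have "2 \<le> length X1 + length Y2"
    using Psi_first_last_offsets[OF \<open>Psi S\<close> s_primitive_imp_distinct_adj[OF pr], of X1 "S ! p" X2 "Y0 @ Y1" Y2]
      False k X X12 Y(1) Y12 by simp
  moreover have "length Y0 + length Ys = card (set S)"
    using arg_cong[OF Y(1), of length] by (simp add: length_remdups_card_conv)
  ultimately have "Suc (length Y1) + Suc (length X2) \<le> 2 * card (set S) - 2"
    using len_X X12 Y12 by simp
  then show ?thesis
    using bound mult_le_mono1 order_trans by blast
qed

theorem mainTheorem10:
  fixes S :: "'a list" and k :: nat
  assumes "k = card (Alph S)" and "k \<ge> 4"
    and "Psi S" and "s_primitive S"
  shows "enat (length S) \<le> enat (2 * k - 2) * gamma (k - 1)"
proof (cases "gamma (k - 1)")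
  case (enat g)
  have "length S \<le> (2 * k - 2) * g"
    unfolding assms(1) Alph_def
  proof (rule length_le_if_Psi)
    show "length U \<le> g" if "sublist U S" "\<not> set S \<subseteq> set U" for U
      using sublist_length_le_gamma[OF \<open>s_primitive S\<close> that] enat assms(1) by (simp add: Alph_def)
    show "card (set S) - 1 \<le> g"
      using le_gamma[of "k - 1"] enat assms(1) by (simp add: Alph_def)
  qed (use assms in \<open>auto simp: Alph_def\<close>)
  then show ?thesis
    using enat by simp
next
  case infinity
  then show ?thesis
    using \<open>k \<ge> 4\<close> by simp
qed

end
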